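(* In the graph $\Gamma_n$, a set of edges $\{(A_1,i_1),(A_2,i_2),\dots,(A_n,i_n)\}$ is ample if $i_1,i_2,\dots,i_n$ are pairwise distinct.
   Context: $\Gamma_n$ is the directed graph whose vertices are all subsets of $\{1,\dots,n\}$ and whose edges are the pairs $(A,i)$ with $A\subseteq\{1,\dots,n\}$, $i\notin A$; the edge $(A,i)$ has tail $A\cup\{i\}$ and head $A$. A directed path is a sequence of edges $e_1,\dots,e_k$ with the head of $e_i$ equal to the tail of $e_{i+1}$; each vertex is joined to itself by the path of length $0$. A source is a vertex that is the head of no edge, a sink a vertex that is the tail of no edge (here the unique source is $\{1,\dots,n\}$ and the unique sink is $\emptyset$). A set $W$ of vertices is ample if (1) for every non-sink vertex $v$ there is $u\in W$ such that there is no directed path from $u$ to $v$, and (2) for every non-source vertex $v$ there is $w\in W$ such that there is no directed path from $v$ to $w$. A set of edges is ample if the set of all their heads and tails is ample. *)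

theory Defs
  imports Main
begin

definition gamma_vert :: "nat \<Rightarrow> nat set set" where
  "gamma_vert n = {A. A \<subseteq> {1..n}}"

definition gamma_edge :: "nat \<Rightarrow> (nat set \<times> nat) set" where
  "gamma_edge n = {(A, i). A \<subseteq> {1..n} \<and> i \<in> {1..n} \<and> i \<notin> A}"

definition edge_tail :: "nat set \<times> nat \<Rightarrow> nat set" where
  "edge_tail e = insert (snd e) (fst e)"

definition edge_head :: "nat set \<times> nat \<Rightarrow> nat set" where
  "edge_head e = fst e"

definition gamma_step :: "nat \<Rightarrow> nat set \<Rightarrow> nat set \<Rightarrow> bool" where
  "gamma_step n u v \<longleftrightarrow> (\<exists>e\<in>gamma_edge n. edge_tail e = u \<and> edge_head e = v)"

definition gamma_path :: "nat \<Rightarrow> nat set \<Rightarrow> nat set \<Rightarrow> bool" where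
  "gamma_path n u v \<longleftrightarrow> (gamma_step n)\<^sup>*\<^sup>* u v"

definition gamma_source :: "nat \<Rightarrow> nat set \<Rightarrow> bool" where
  "gamma_source n v \<longleftrightarrow> v \<in> gamma_vert n \<and> \<not> (\<exists>e\<in>gamma_edge n. edge_head e = v)"

definition gamma_sink :: "nat \<Rightarrow> nat set \<Rightarrow> bool" where
  "gamma_sink n v \<longleftrightarrow> v \<in> gamma_vert n \<and> \<not> (\<exists>e\<in>gamma_edge n. edge_tail e = v)"

definition ample_vertices :: "nat \<Rightarrow> nat set set \<Rightarrow> bool" where
  "ample_vertices n W \<longleftrightarrow>
     (\<forall>v\<in>gamma_vert n. \<not> gamma_sink n v \<longrightarrow> (\<exists>u\<in>W. \<not> gamma_path n u v)) \<and>
     (\<forall>v\<in>gamma_vert n. \<not> gamma_source n v \<longrightarrow> (\<exists>w\<in>W. \<not> gamma_path n v w))"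

definition ample_edges :: "nat \<Rightarrow> (nat set \<times> nat) set \<Rightarrow> bool" where
  "ample_edges n E \<longleftrightarrow> ample_vertices n (edge_head ` E \<union> edge_tail ` E)"

end

theory Submission
  imports Defs
begin

text \<open>Paths in \<open>\<Gamma>\<^sub>n\<close> only shrink sets, so a vertex omitting an element \<open>j\<close> cannot
  reach a vertex containing \<open>j\<close>. A non-sink contains some \<open>j\<close>, which the head of the edge
  labelled \<open>j\<close> omits; a non-source omits some \<open>j\<close>, which the tail of that edge contains.
  Pairwise distinct labels \<open>i\<^sub>1, \<dots>, i\<^sub>n\<close> from \<open>{1..n}\<close> exhaust \<open>{1..n}\<close>, so every label
  is available.\<close>

lemma gamma_path_subset: "gamma_path n u v \<Longrightarrow> v \<subseteq> u"
  unfolding gamma_path_def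
proof (induction rule: rtranclp_induct)
  case base
  then show ?case by simp
next
  case (step y z)
  then show ?case by (auto simp: gamma_step_def edge_tail_def edge_head_def)
qed

lemma non_sink_has_element:
  assumes "v \<in> gamma_vert n" "\<not> gamma_sink n v"
  obtains j where "j \<in> {1..n}" "j \<in> v"
  using assms by (force simp: gamma_sink_def gamma_edge_def edge_tail_def)

lemma non_source_misses_element:
  assumes "v \<in> gamma_vert n" "\<not> gamma_source n v"
  obtains j where "j \<in> {1..n}" "j \<notin> v"
  using assms by (force simp: gamma_source_def gamma_edge_def edge_head_def)

lemma ample_verticesI:
  assumes omits: "\<And>j. j \<in> {1..n} \<Longrightarrow> \<exists>u\<in>W. j \<notin> u"
    and contains: "\<And>j. j \<in> {1..n} \<Longrightarrow> \<exists>w\<in>W. j \<in> w"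
  shows "ample_vertices n W"
  unfolding ample_vertices_def
proof (intro conjI ballI impI)
  fix v assume "v \<in> gamma_vert n" "\<not> gamma_sink n v"
  then obtain j where "j \<in> {1..n}" "j \<in> v" by (rule non_sink_has_element)
  with omits obtain u where "u \<in> W" "j \<notin> u" by blast
  with \<open>j \<in> v\<close> show "\<exists>u\<in>W. \<not> gamma_path n u v" using gamma_path_subset by blast
next
  fix v assume "v \<in> gamma_vert n" "\<not> gamma_source n v"
  then obtain j where "j \<in> {1..n}" "j \<notin> v" by (rule non_source_misses_element)
  with contains obtain w where "w \<in> W" "j \<in> w" by blast
  with \<open>j \<notin> v\<close> show "\<exists>w\<in>W. \<not> gamma_path n v w" using gamma_path_subset by blast
qed

lemma ample_edges_if_labels_cover:
  assumes edges: "E \<subseteq> gamma_edge n"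
    and labels: "{1..n} \<subseteq> snd ` E"
  shows "ample_edges n E"
  unfolding ample_edges_def
proof (rule ample_verticesI)
  fix j assume "j \<in> {1..n}"
  with labels obtain e where e: "e \<in> E" "snd e = j" by blast
  with edges have "j \<notin> edge_head e" "j \<in> edge_tail e"
    by (auto simp: gamma_edge_def edge_head_def edge_tail_def)
  with e show "\<exists>u\<in>edge_head ` E \<union> edge_tail ` E. j \<notin> u"
    and "\<exists>w\<in>edge_head ` E \<union> edge_tail ` E. j \<in> w" by blast+
qed

theorem proposition3p2p3:
  fixes n :: nat and A :: "nat \<Rightarrow> nat set" and i :: "nat \<Rightarrow> nat"
  assumes "\<forall>k\<in>{1..n}. (A k, i k) \<in> gamma_edge n"
    and "inj_on i {1..n}"
  shows "ample_edges n ((\<lambda>k. (A k, i k)) ` {1..n})"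
proof (rule ample_edges_if_labels_cover)
  show "(\<lambda>k. (A k, i k)) ` {1..n} \<subseteq> gamma_edge n"
    using assms(1) by blast
  have "i ` {1..n} \<subseteq> {1..n}"
    using assms(1) by (auto simp: gamma_edge_def)
  then have "i ` {1..n} = {1..n}"
    using endo_inj_surj[OF _ _ assms(2)] by simp
  then show "{1..n} \<subseteq> snd ` (\<lambda>k. (A k, i k)) ` {1..n}"
    by (simp add: image_image)
qed

end
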